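(* Let $\rho>1$ and let $\mathbf{p}=(p_1,\ldots,p_n)$ be a probability distribution with $p_1\geq\cdots\geq p_n>0$ and $p_1/p_n\leq\rho$. Then $$\log_2 n-H(\mathbf{z}_\rho(\mathbf{p}))\leq\left(\frac{\rho\ln\rho}{\rho-1}-1-\ln\frac{\rho\ln\rho}{\rho-1}\right)\frac{1}{\ln 2}.$$
   Context: $H$ is Shannon entropy in bits and $\ln$ is the natural logarithm. Let $i=\left\lfloor\frac{1-np_n}{p_n(\rho-1)}\right\rfloor$. Define $\mathbf{z}_\rho(\mathbf{p})$ as the length-$n$ vector whose first $i$ entries equal $\rho p_n$, whose next entry equals $1-(n+i\rho-i-1)p_n$, and whose remaining $n-i-1$ entries equal $p_n$. *)

theory Defs
  imports Complex_Main
begin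

text \<open>Vectors of length n are functions on indices 1..n.
  Shannon entropy in bits (entries are positive where it is used).\<close>
definition entropy :: "nat \<Rightarrow> (nat \<Rightarrow> real) \<Rightarrow> real" where
  "entropy n q = - (\<Sum>k=1..n. q k * log 2 (q k))"

text \<open>The index i = floor((1 - n p_n) / (p_n (rho - 1))) (nonnegative when n p_n \<le> 1).\<close>
definition zidx :: "real \<Rightarrow> nat \<Rightarrow> (nat \<Rightarrow> real) \<Rightarrow> nat" where
  "zidx \<rho> n p = nat \<lfloor>(1 - real n * p n) / (p n * (\<rho> - 1))\<rfloor>"

definition zvec :: "real \<Rightarrow> nat \<Rightarrow> (nat \<Rightarrow> real) \<Rightarrow> nat \<Rightarrow> real" where
  "zvec \<rho> n p k = (let i = zidx \<rho> n p in
     if k \<le> i then \<rho> * p n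
     else if k = i + 1 then 1 - (real n + real i * \<rho> - real i - 1) * p n
     else p n)"

end

theory Submission imports Defs "HOL-Analysis.Analysis" begin

text \<open>Every entry of \<open>z = z\<^sub>\<rho>(p)\<close> lies in \<open>[p\<^sub>n, \<rho> p\<^sub>n]\<close>, and the ratio \<open>t\<close> of an entry to \<open>p\<^sub>n\<close>
  satisfies \<open>t ln t \<le> c (t - 1)\<close> with \<open>c = \<rho> ln \<rho> / (\<rho> - 1)\<close>, by convexity of \<open>t ln t\<close> on \<open>[1, \<rho>]\<close>.
  Summing, \<open>ln 2 \<cdot> (log\<^sub>2 n - H(z)) = \<Sum> z\<^sub>k ln (n z\<^sub>k) \<le> ln a + (1 - a) c\<close> with \<open>a = n p\<^sub>n\<close>,
  and \<open>ln (a c) \<le> a c - 1\<close> bounds this by \<open>c - 1 - ln c\<close>, uniformly in \<open>a\<close>.\<close>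

lemma mul_ln_le_chord:
  fixes \<rho> t :: real
  assumes "\<rho> > 1" "1 \<le> t" "t \<le> \<rho>"
  shows "t * ln t \<le> (t - 1) * (\<rho> * ln \<rho> / (\<rho> - 1))"
proof -
  have "convex_on {1..\<rho>} (\<lambda>t. t * ln t)"
  proof (rule convex_on_realI[where f' = "\<lambda>t. ln t + 1"])
    fix x assume "x \<in> {1..\<rho>}"
    then show "((\<lambda>t. t * ln t) has_real_derivative ln x + 1) (at x)"
      by (auto intro!: derivative_eq_intros)
  qed auto
  then have "t * ln t \<le> (\<rho> * ln \<rho> - 1 * ln 1) / (\<rho> - 1) * (t - 1) + 1 * ln 1"
    using convex_onD_Icc'[of 1 \<rho> "\<lambda>t. t * ln t" t] assms by simp
  then show ?thesis by (simp add: field_simps)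
qed

lemma sum_mul_ln_card_le:
  fixes z :: "'a \<Rightarrow> real" and A :: "'a set" and q \<rho> :: real
  assumes "\<rho> > 1" "q > 0" "finite A" "A \<noteq> {}"
    and range: "\<And>k. k \<in> A \<Longrightarrow> q \<le> z k \<and> z k \<le> \<rho> * q"
    and sum: "(\<Sum>k\<in>A. z k) = 1"
  shows "(\<Sum>k\<in>A. z k * ln (card A * z k))
    \<le> \<rho> * ln \<rho> / (\<rho> - 1) - 1 - ln (\<rho> * ln \<rho> / (\<rho> - 1))"
proof -
  define c where "c = \<rho> * ln \<rho> / (\<rho> - 1)"
  define a where "a = card A * q"
  have "c > 0" unfolding c_def using \<open>\<rho> > 1\<close> by simp
  have "card A > 0" using assms(3,4) by (simp add: card_gt_0_iff)
  then have "a > 0" unfolding a_def using \<open>q > 0\<close> by simp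
  have term_le: "z k * ln (card A * z k) \<le> z k * ln a + (z k - q) * c" if "k \<in> A" for k
  proof -
    define t where "t = z k / q"
    have zk: "z k = q * t" unfolding t_def using \<open>q > 0\<close> by simp
    have t: "1 \<le> t" "t \<le> \<rho>" using range[OF that] \<open>q > 0\<close> unfolding t_def by (auto simp: field_simps)
    have "z k * ln (card A * z k) = z k * ln a + q * (t * ln t)"
      using \<open>card A > 0\<close> \<open>q > 0\<close> t zk by (simp add: a_def ln_mult algebra_simps)
    also have "\<dots> \<le> z k * ln a + q * ((t - 1) * c)"
      using mul_ln_le_chord[OF \<open>\<rho> > 1\<close> t, folded c_def] \<open>q > 0\<close> by simp
    finally show ?thesis using zk by (simp add: algebra_simps)
  qed
  have "(\<Sum>k\<in>A. z k * ln (card A * z k)) \<le> (\<Sum>k\<in>A. z k * ln a + (z k - q) * c)"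
    using term_le by (rule sum_mono)
  also have "\<dots> = ln a + (1 - a) * c"
    using sum by (simp add: a_def sum.distrib sum_subtractf flip: sum_distrib_right)
  also have "\<dots> \<le> c - 1 - ln c"
    using ln_le_minus_one[of "a * c"] \<open>a > 0\<close> \<open>c > 0\<close> by (simp add: ln_mult algebra_simps)
  finally show ?thesis unfolding c_def .
qed

lemma log_minus_entropy_eq:
  fixes z :: "nat \<Rightarrow> real"
  assumes "n \<ge> 1" "\<And>k. k \<in> {1..n} \<Longrightarrow> z k > 0" "(\<Sum>k=1..n. z k) = 1"
  shows "log 2 n - entropy n z = (\<Sum>k=1..n. z k * ln (n * z k)) / ln 2"
proof -
  have "log 2 n - entropy n z = (\<Sum>k=1..n. z k) * log 2 n + (\<Sum>k=1..n. z k * log 2 (z k))"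
    unfolding entropy_def assms(3) by simp
  also have "\<dots> = (\<Sum>k=1..n. z k * log 2 n + z k * log 2 (z k))"
    by (simp add: sum.distrib sum_distrib_right)
  also have "\<dots> = (\<Sum>k=1..n. z k * ln (n * z k) / ln 2)"
    using assms(1,2) by (intro sum.cong) (simp_all add: log_def ln_mult add_divide_distrib algebra_simps)
  finally show ?thesis by (simp add: sum_divide_distrib)
qed

lemma antitone_on_interval_le:
  fixes p :: "nat \<Rightarrow> 'a::order"
  assumes "\<forall>k. 1 \<le> k \<and> k < n \<longrightarrow> p (k + 1) \<le> p k" "1 \<le> j" "j \<le> m" "m \<le> n"
  shows "p m \<le> p j"
  using assms(3,4)
proof (induction m rule: dec_induct)
  case (step m)
  then have "p (m + 1) \<le> p m" using assms(1,2) by simp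
  with step show ?case by simp
qed simp

lemma zidx_bounds:
  fixes \<rho> :: real and p :: "nat \<Rightarrow> real"
  assumes "\<rho> > 1" "p n > 0" "n * p n \<le> 1" "1 \<le> n * \<rho> * p n"
  shows "zidx \<rho> n p * (p n * (\<rho> - 1)) \<le> 1 - n * p n"
    and "1 - n * p n < (zidx \<rho> n p + 1) * (p n * (\<rho> - 1))"
    and "zidx \<rho> n p \<le> n"
proof -
  define A where "A = (1 - n * p n) / (p n * (\<rho> - 1))"
  have d: "p n * (\<rho> - 1) > 0" using assms(1,2) by simp
  have "A \<ge> 0" unfolding A_def using assms(3) d by simp
  then have "real (zidx \<rho> n p) = of_int \<lfloor>A\<rfloor>" unfolding zidx_def A_def by simp
  then have i: "zidx \<rho> n p \<le> A" "A < zidx \<rho> n p + 1" by linarith+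
  show lower: "zidx \<rho> n p * (p n * (\<rho> - 1)) \<le> 1 - n * p n"
    using i(1) d unfolding A_def by (simp add: le_divide_eq)
  show "1 - n * p n < (zidx \<rho> n p + 1) * (p n * (\<rho> - 1))"
    using i(2) d unfolding A_def by (simp add: divide_less_eq)
  have "zidx \<rho> n p * (p n * (\<rho> - 1)) \<le> n * (p n * (\<rho> - 1))"
    using lower assms(4) by (simp add: algebra_simps)
  then show "zidx \<rho> n p \<le> n" using d by (metis mult_right_le_imp_le of_nat_le_iff)
qed

lemma zvec_bounds:
  fixes \<rho> :: real and p :: "nat \<Rightarrow> real"
  assumes "\<rho> > 1" "p n > 0" "n * p n \<le> 1" "1 \<le> n * \<rho> * p n"
  shows "p n \<le> zvec \<rho> n p k \<and> zvec \<rho> n p k \<le> \<rho> * p n"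
  using zidx_bounds[of \<rho> p n, OF assms] assms(1,2) unfolding zvec_def Let_def by (auto simp: algebra_simps)

lemma sum_zvec:
  fixes \<rho> :: real and p :: "nat \<Rightarrow> real"
  assumes "\<rho> > 1" "p n > 0" "n * p n \<le> 1" "1 \<le> n * \<rho> * p n"
  shows "(\<Sum>k=1..n. zvec \<rho> n p k) = 1"
proof -
  define i where "i = zidx \<rho> n p"
  note bounds = zidx_bounds[of \<rho> p n, OF assms, folded i_def]
  have z: "zvec \<rho> n p k = (if k \<le> i then \<rho> * p n
      else if k = i + 1 then 1 - (n + i * \<rho> - i - 1) * p n else p n)" for k
    unfolding zvec_def i_def Let_def by simp
  show ?thesis
  proof (cases "i = n")
    case True
    then have "(\<Sum>k=1..n. zvec \<rho> n p k) = n * \<rho> * p n" by (simp add: z)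
    then show ?thesis using True bounds(1) assms(4) by (simp add: algebra_simps)
  next
    case False
    then have "i < n" using bounds(3) by simp
    then have "{1..n} = {1..i} \<union> ({i+1} \<union> {i+2..n})" by auto
    then have "(\<Sum>k=1..n. zvec \<rho> n p k)
        = (\<Sum>k=1..i. zvec \<rho> n p k) + (zvec \<rho> n p (i+1) + (\<Sum>k=i+2..n. zvec \<rho> n p k))"
      by (simp add: sum.union_disjoint)
    also have "\<dots> = i * (\<rho> * p n) + (1 - (n + i * \<rho> - i - 1) * p n + (n - (i+1)) * p n)"
      by (simp add: z)
    finally show ?thesis using \<open>i < n\<close> by (simp add: of_nat_diff algebra_simps)
  qed
qed

theorem lemma7:
  fixes \<rho> :: real and n :: nat and p :: "nat \<Rightarrow> real"
  assumes "\<rho> > 1" and "n \<ge> 1"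
    and "\<forall>k\<in>{1..n}. p k \<ge> 0"
    and "(\<Sum>k=1..n. p k) = 1"
    and "\<forall>k. 1 \<le> k \<and> k < n \<longrightarrow> p (k + 1) \<le> p k"
    and "p n > 0"
    and "p 1 / p n \<le> \<rho>"
  shows "log 2 (real n) - entropy n (zvec \<rho> n p)
    \<le> (\<rho> * ln \<rho> / (\<rho> - 1) - 1 - ln (\<rho> * ln \<rho> / (\<rho> - 1))) * (1 / ln 2)"
proof -
  have range: "p n \<le> p k \<and> p k \<le> \<rho> * p n" if "k \<in> {1..n}" for k
    using antitone_on_interval_le[OF assms(5), of k n] antitone_on_interval_le[OF assms(5), of 1 k]
      that assms(6,7) by (auto simp: divide_le_eq)
  have "n * p n \<le> 1" "1 \<le> n * \<rho> * p n"
    using sum_mono[of "{1..n}" "\<lambda>_. p n" p] sum_mono[of "{1..n}" p "\<lambda>_. \<rho> * p n"] range assms(4)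
    by auto
  note z = zvec_bounds[of \<rho> p n, OF assms(1,6) this] sum_zvec[of \<rho> p n, OF assms(1,6) this]
  have "log 2 n - entropy n (zvec \<rho> n p) = (\<Sum>k=1..n. zvec \<rho> n p k * ln (n * zvec \<rho> n p k)) / ln 2"
    using z assms(2,6) by (intro log_minus_entropy_eq) (auto intro: less_le_trans)
  also have "\<dots> \<le> (\<rho> * ln \<rho> / (\<rho> - 1) - 1 - ln (\<rho> * ln \<rho> / (\<rho> - 1))) / ln 2"
    using sum_mul_ln_card_le[OF assms(1,6), of "{1..n}" "zvec \<rho> n p"] z assms(2)
    by (intro divide_right_mono) auto
  finally show ?thesis by simp
qed

end
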